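(* Let $\psi\in\mathbb{R}[x]$ and suppose $\psi=\psi^{(1)}\psi^{(2)}$ with $\psi^{(1)},\psi^{(2)}\in\mathbb{R}[x]$ non-constant. If the Fischer operator $F_\psi$ is surjective, then $\psi^{(1)}$ and $\psi^{(2)}$ are harmonic divisors.
   Context: $\mathbb{R}[x]$ denotes the real polynomials in $d$ variables, $\Delta$ the Laplacian, and $F_\psi:\mathbb{R}[x]\to\mathbb{R}[x]$, $F_\psi(q)=\Delta(\psi q)$. A polynomial $f$ is a harmonic divisor if there exists a non-zero polynomial $q$ such that $fq$ is harmonic. *)

theory Defs
  imports Complex_Main "HOL-Library.Poly_Mapping"
begin

text \<open>Real polynomials in the variables indexed by the finite type 'v (so d = CARD('v)):
  a polynomial is a finitely supported map from monomials (finitely supported exponent vectors)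
  to real coefficients; multiplication is the convolution product of Poly_Mapping.\<close>

type_synonym 'v rpoly = "('v \<Rightarrow>\<^sub>0 nat) \<Rightarrow>\<^sub>0 real"

definition mpderiv :: "'v \<Rightarrow> 'v rpoly \<Rightarrow> 'v rpoly" where
  "mpderiv i p = (\<Sum>m\<in>Poly_Mapping.keys p.
     Poly_Mapping.single (m - Poly_Mapping.single i (1::nat))
       (real (Poly_Mapping.lookup m i) * Poly_Mapping.lookup p m))"

definition laplacian :: "'v::finite rpoly \<Rightarrow> 'v rpoly" where
  "laplacian p = (\<Sum>i\<in>UNIV. mpderiv i (mpderiv i p))"

definition harmonic :: "'v::finite rpoly \<Rightarrow> bool" where
  "harmonic p \<longleftrightarrow> laplacian p = 0"

definition fischer :: "'v::finite rpoly \<Rightarrow> 'v rpoly \<Rightarrow> 'v rpoly" where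
  "fischer psi q = laplacian (psi * q)"

definition harmonic_divisor :: "'v::finite rpoly \<Rightarrow> bool" where
  "harmonic_divisor f \<longleftrightarrow> (\<exists>q. q \<noteq> 0 \<and> harmonic (f * q))"

definition is_const_poly :: "'v rpoly \<Rightarrow> bool" where
  "is_const_poly p \<longleftrightarrow> Poly_Mapping.keys p \<subseteq> {0}"

end

theory Submission
  imports Defs
begin

text \<open>If \<open>\<psi>\<^sub>1\<close> is not a harmonic divisor, then \<open>q \<mapsto> \<Delta>(\<psi>\<^sub>1 q)\<close> is injective.
  Surjectivity of \<open>F\<^sub>\<psi>\<close> yields \<open>q\<close> with \<open>\<Delta>(\<psi>\<^sub>1 \<psi>\<^sub>2 q) = \<Delta>(\<psi>\<^sub>1)\<close>, i.e.
  \<open>\<Delta>(\<psi>\<^sub>1 (1 - \<psi>\<^sub>2 q)) = 0\<close>, so \<open>\<psi>\<^sub>2 q = 1\<close>. But the units of a polynomial ring over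
  a domain are constants: comparing leading terms for a monomial order, the leading monomials
  of \<open>\<psi>\<^sub>2\<close> and \<open>q\<close> add up to \<open>0\<close>. This contradicts \<open>\<psi>\<^sub>2\<close> being non-constant.\<close>

lemma lookup_mult_unique_decomposition:
  fixes f g :: "'a::monoid_add \<Rightarrow>\<^sub>0 'b::semiring_0"
  assumes "\<And>l q. l \<in> Poly_Mapping.keys f \<Longrightarrow> q \<in> Poly_Mapping.keys g \<Longrightarrow> l + q = a + b \<Longrightarrow> l = a \<and> q = b"
  shows "Poly_Mapping.lookup (f * g) (a + b) = Poly_Mapping.lookup f a * Poly_Mapping.lookup g b"
proof -
  have "Poly_Mapping.lookup (f * g) (a + b)
      = (\<Sum>(l, q). Poly_Mapping.lookup f l * Poly_Mapping.lookup g q when a + b = l + q)"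
    by (simp add: times_poly_mapping.rep_eq prod_fun_unfold_prod)
  also have "\<dots> = (\<Sum>lq. Poly_Mapping.lookup f a * Poly_Mapping.lookup g b when lq = (a, b))"
  proof (rule Sum_any.cong, clarify)
    fix l q
    show "(Poly_Mapping.lookup f l * Poly_Mapping.lookup g q when a + b = l + q)
        = (Poly_Mapping.lookup f a * Poly_Mapping.lookup g b when (l, q) = (a, b))"
      using assms[of l q] by (cases "Poly_Mapping.lookup f l = 0 \<or> Poly_Mapping.lookup g q = 0")
        (auto simp: when_def in_keys_iff)
  qed
  finally show ?thesis by simp
qed

lemma lookup_mult_maximal_keys:
  fixes f g :: "'a::monoid_add \<Rightarrow>\<^sub>0 'b::semiring_0"
    and r :: "'a \<Rightarrow> 'c::linordered_cancel_ab_semigroup_add"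
  assumes "inj r" and r_add: "\<And>x y. r (x + y) = r x + r y"
    and a_max: "\<And>l. l \<in> Poly_Mapping.keys f \<Longrightarrow> r l \<le> r a"
    and b_max: "\<And>q. q \<in> Poly_Mapping.keys g \<Longrightarrow> r q \<le> r b"
  shows "Poly_Mapping.lookup (f * g) (a + b) = Poly_Mapping.lookup f a * Poly_Mapping.lookup g b"
proof (rule lookup_mult_unique_decomposition)
  fix l q
  assume l: "l \<in> Poly_Mapping.keys f" and q: "q \<in> Poly_Mapping.keys g" and "l + q = a + b"
  then have sum_eq: "r l + r q = r a + r b" by (metis r_add)
  have "r l = r a"
  proof (rule ccontr)
    assume "r l \<noteq> r a"
    then have "r l + r q < r a + r b"
      using a_max[OF l] b_max[OF q] by (intro add_less_le_mono) auto
    with sum_eq show False by simp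
  qed
  with sum_eq have "r q = r b" by simp
  with \<open>r l = r a\<close> show "l = a \<and> q = b" using \<open>inj r\<close> by (simp add: inj_eq)
qed

lemma zero_le_poly_mapping_nat: "(0 :: 'a::linorder \<Rightarrow>\<^sub>0 nat) \<le> f"
proof (cases "f = 0")
  case False
  define k where "k = Min (Poly_Mapping.keys f)"
  have "k \<in> Poly_Mapping.keys f" "\<And>k'. k' < k \<Longrightarrow> k' \<notin> Poly_Mapping.keys f"
    using False by (auto simp: k_def)
  then have "less_fun (Poly_Mapping.lookup 0) (Poly_Mapping.lookup f)"
    by (intro less_funI) (auto simp: in_keys_iff)
  then show ?thesis by (simp add: less_eq_poly_mapping.rep_eq)
qed simp

text \<open>The variable type carries no order, so instead of a monomial order on it we enumerate the
  variables and use the lexicographic order of \<open>nat \<Rightarrow>\<^sub>0 nat\<close>, which is compatible with addition.\<close>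

lemma exists_injective_additive_map_to_nat_monomials:
  "\<exists>r :: ('v::finite \<Rightarrow>\<^sub>0 nat) \<Rightarrow> (nat \<Rightarrow>\<^sub>0 nat). inj r \<and> (\<forall>a b. r (a + b) = r a + r b)"
proof -
  obtain e :: "'v \<Rightarrow> nat" where "inj e"
    using finite_imp_inj_to_nat_seg[OF finite_UNIV] by blast
  define r where "r m = (\<Sum>v\<in>UNIV. Poly_Mapping.single (e v) (Poly_Mapping.lookup m v))"
    for m :: "'v \<Rightarrow>\<^sub>0 nat"
  have lookup_r: "Poly_Mapping.lookup (r m) (e v) = Poly_Mapping.lookup m v" for m v
    using \<open>inj e\<close> by (simp add: r_def lookup_sum lookup_single when_def inj_eq)
  have "inj r"
    by (rule injI, rule poly_mapping_eqI) (metis lookup_r)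
  moreover have "r (a + b) = r a + r b" for a b
    by (simp add: r_def lookup_add single_add sum.distrib)
  ultimately show ?thesis by blast
qed

lemma finite_has_maximal_image:
  fixes r :: "'a \<Rightarrow> 'c::linorder"
  assumes "finite K" "K \<noteq> {}"
  obtains a where "a \<in> K" "\<And>l. l \<in> K \<Longrightarrow> r l \<le> r a"
proof -
  have "Max (r ` K) \<in> r ` K" using assms by simp
  then obtain a where "a \<in> K" "r a = Max (r ` K)" by force
  with assms show thesis by (intro that) auto
qed

lemma keys_subset_zero_if_mult_eq_one:
  fixes p q :: "('v::finite \<Rightarrow>\<^sub>0 nat) \<Rightarrow>\<^sub>0 'b::semiring_1_no_zero_divisors"
  assumes "p * q = 1"
  shows "Poly_Mapping.keys p \<subseteq> {0}"
proof -
  obtain r :: "('v \<Rightarrow>\<^sub>0 nat) \<Rightarrow> (nat \<Rightarrow>\<^sub>0 nat)" where "inj r" and r_add: "\<And>a b. r (a + b) = r a + r b"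
    using exists_injective_additive_map_to_nat_monomials by blast
  have "r 0 = 0" using r_add[of 0 0] by simp
  have "p \<noteq> 0" "q \<noteq> 0" using assms by auto
  then obtain a b where a: "a \<in> Poly_Mapping.keys p" "\<And>l. l \<in> Poly_Mapping.keys p \<Longrightarrow> r l \<le> r a"
    and b: "b \<in> Poly_Mapping.keys q" "\<And>l. l \<in> Poly_Mapping.keys q \<Longrightarrow> r l \<le> r b"
    by (metis finite_keys keys_eq_empty finite_has_maximal_image)
  have "Poly_Mapping.lookup (p * q) (a + b) = Poly_Mapping.lookup p a * Poly_Mapping.lookup q b"
    using \<open>inj r\<close> r_add a(2) b(2) by (rule lookup_mult_maximal_keys)
  also have "\<dots> \<noteq> 0" using a(1) b(1) by (simp add: in_keys_iff)
  finally have "a + b = 0" using assms by (simp add: lookup_one when_def split: if_splits)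
  then have "r a + r b = 0" using r_add \<open>r 0 = 0\<close> by metis
  then have "r a \<le> 0" using zero_le_poly_mapping_nat[of "r b"] by (metis add_le_cancel_left add_0_right)
  show ?thesis
  proof
    fix l assume "l \<in> Poly_Mapping.keys p"
    have "r l \<le> r 0" using a(2)[OF \<open>l \<in> _\<close>] \<open>r a \<le> 0\<close> \<open>r 0 = 0\<close> by simp
    then have "r l = r 0" using zero_le_poly_mapping_nat \<open>r 0 = 0\<close> by (metis antisym)
    then show "l \<in> {0}" using \<open>inj r\<close> by (simp add: inj_eq)
  qed
qed

lemma mpderiv_eq_sum_over_superset:
  assumes "finite S" "Poly_Mapping.keys p \<subseteq> S"
  shows "mpderiv i p = (\<Sum>m\<in>S. Poly_Mapping.single (m - Poly_Mapping.single i (1::nat))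
       (real (Poly_Mapping.lookup m i) * Poly_Mapping.lookup p m))"
  unfolding mpderiv_def
  by (rule sum.mono_neutral_left) (use assms in \<open>auto simp: in_keys_iff\<close>)

lemma mpderiv_add: "mpderiv i (p + q) = mpderiv i p + mpderiv i q"
proof -
  define S where "S = Poly_Mapping.keys p \<union> Poly_Mapping.keys q"
  have fin: "finite S" by (simp add: S_def)
  have "Poly_Mapping.keys (p + q) \<subseteq> S" using keys_add[of p q] by (auto simp: S_def)
  then show ?thesis
    using mpderiv_eq_sum_over_superset[OF fin, of "p + q" i]
      mpderiv_eq_sum_over_superset[OF fin, of p i] mpderiv_eq_sum_over_superset[OF fin, of q i]
    by (simp add: S_def lookup_add distrib_left single_add sum.distrib)
qed

lemma laplacian_add: "laplacian (p + q) = laplacian p + laplacian q"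
  unfolding laplacian_def by (simp add: mpderiv_add sum.distrib)

lemma laplacian_diff: "laplacian (p - q) = laplacian p - laplacian q"
  using laplacian_add[of "p - q" q] by (simp add: eq_diff_eq)

lemma harmonic_divisor_if_surj_fischer:
  fixes psi1 psi2 :: "'v::finite rpoly"
  assumes "\<not> is_const_poly psi2" and "surj (fischer (psi1 * psi2))"
  shows "harmonic_divisor psi1"
proof (rule ccontr)
  assume "\<not> harmonic_divisor psi1"
  then have laplacian_injective: "laplacian (psi1 * p) = 0 \<Longrightarrow> p = 0" for p
    by (auto simp: harmonic_divisor_def harmonic_def)
  obtain q where "fischer (psi1 * psi2) q = laplacian psi1"
    using assms(2) by (metis surjD)
  then have "laplacian (psi1 * (1 - psi2 * q)) = 0"
    by (simp add: fischer_def right_diff_distrib laplacian_diff mult.assoc)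
  then have "1 - psi2 * q = 0" by (rule laplacian_injective)
  then have "psi2 * q = 1" by simp
  then have "Poly_Mapping.keys psi2 \<subseteq> {0}" by (rule keys_subset_zero_if_mult_eq_one)
  with assms(1) show False by (simp add: is_const_poly_def)
qed

theorem mainTheorem4:
  fixes psi1 psi2 :: "'v::finite rpoly"
  assumes "\<not> is_const_poly psi1" and "\<not> is_const_poly psi2"
    and "surj (fischer (psi1 * psi2))"
  shows "harmonic_divisor psi1 \<and> harmonic_divisor psi2"
proof
  show "harmonic_divisor psi1"
    using assms(2,3) by (rule harmonic_divisor_if_surj_fischer)
  show "harmonic_divisor psi2"
    using assms(1,3) by (simp add: harmonic_divisor_if_surj_fischer mult.commute)
qed

end
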